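(* Let $X$ be a finite connected symmetric graph and let $G$ be an arc-transitive group of automorphisms of $X$. Then the split-length of $(X,G)$ is finite.
   Context: Graphs are finite and simple; maps are composed on the right. A regular covering projection $\wp\colon\tilde X\to X$ is a surjective graph homomorphism between connected graphs, locally bijective on neighbourhoods, whose group $\mathrm{CT}(\wp)$ of covering transformations (automorphisms $c$ with $c\wp=\wp$) acts regularly on fibres; a $2$-cover has $\mathrm{CT}(\wp)\cong\mathbb{Z}_2$. A lift of $g\in\mathrm{Aut}\,X$ is $\tilde g$ with $\wp g=\tilde g\wp$. A chain $X_n\xrightarrow{\wp_n}X_{n-1}\to\cdots\to X_1\xrightarrow{\wp_1}X_0=X$ of consecutive $2$-covers is $G$-admissible if there are groups $G=G_0,G_1,\dots,G_n$ with $G_j\leq\mathrm{Aut}\,X_j$ equal to the lift (group of all lifts) of $G_{j-1}$ along $\wp_j$ for each $j$; it is $G$-split-admissible if moreover every extension $\mathrm{CT}(\wp_j)\to G_j\to G_{j-1}$ splits (i.e. $\mathrm{CT}(\wp_j)$ has a complement in $G_j$). The split-length of $(X,G)$ is the largest $n$ for which a $G$-split-admissible chain of $n$ consecutive $2$-covers exists. *)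

theory Defs
  imports Main
begin

record 'a graph =
  verts :: "'a set"
  arcs  :: "'a rel"

definition graph :: "'a graph \<Rightarrow> bool" where
  "graph X \<longleftrightarrow> finite (verts X) \<and> arcs X \<subseteq> verts X \<times> verts X
      \<and> sym (arcs X) \<and> irrefl (arcs X)"

definition connected_graph :: "'a graph \<Rightarrow> bool" where
  "connected_graph X \<longleftrightarrow> verts X \<noteq> {} \<and>
     (\<forall>u\<in>verts X. \<forall>v\<in>verts X. (u, v) \<in> (arcs X)\<^sup>*)"

definition nbhd :: "'a graph \<Rightarrow> 'a \<Rightarrow> 'a set" where
  "nbhd X v = {u. (v, u) \<in> arcs X}"

definition aut :: "'a graph \<Rightarrow> ('a \<Rightarrow> 'a) set" where
  "aut X = {f. bij_betw f (verts X) (verts X) \<and> (\<forall>x. x \<notin> verts X \<longrightarrow> f x = x)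
      \<and> (\<forall>u\<in>verts X. \<forall>v\<in>verts X. (u, v) \<in> arcs X \<longleftrightarrow> (f u, f v) \<in> arcs X)}"

definition perm_group :: "('a \<Rightarrow> 'a) set \<Rightarrow> bool" where
  "perm_group G \<longleftrightarrow> id \<in> G \<and> (\<forall>f\<in>G. \<forall>g\<in>G. f \<circ> g \<in> G)
      \<and> (\<forall>f\<in>G. \<exists>g\<in>G. f \<circ> g = id \<and> g \<circ> f = id)"

definition aut_subgroup :: "'a graph \<Rightarrow> ('a \<Rightarrow> 'a) set \<Rightarrow> bool" where
  "aut_subgroup X G \<longleftrightarrow> G \<subseteq> aut X \<and> perm_group G"

definition vertex_transitive :: "'a graph \<Rightarrow> ('a \<Rightarrow> 'a) set \<Rightarrow> bool" where
  "vertex_transitive X G \<longleftrightarrow> (\<forall>u\<in>verts X. \<forall>v\<in>verts X. \<exists>g\<in>G. g u = v)"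

definition arc_transitive :: "'a graph \<Rightarrow> ('a \<Rightarrow> 'a) set \<Rightarrow> bool" where
  "arc_transitive X G \<longleftrightarrow>
     (\<forall>(u, v)\<in>arcs X. \<forall>(u', v')\<in>arcs X. \<exists>g\<in>G. g u = u' \<and> g v = v')"

definition symmetric_graph :: "'a graph \<Rightarrow> bool" where
  "symmetric_graph X \<longleftrightarrow> vertex_transitive X (aut X) \<and> arc_transitive X (aut X)"

definition covering :: "'b graph \<Rightarrow> 'a graph \<Rightarrow> ('b \<Rightarrow> 'a) \<Rightarrow> bool" where
  "covering Y X p \<longleftrightarrow> graph Y \<and> graph X \<and> connected_graph Y \<and> connected_graph X
     \<and> p ` verts Y = verts X
     \<and> (\<forall>u v. (u, v) \<in> arcs Y \<longrightarrow> (p u, p v) \<in> arcs X)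
     \<and> (\<forall>y\<in>verts Y. bij_betw p (nbhd Y y) (nbhd X (p y)))"

text \<open>Covering transformations: automorphisms \<open>c\<close> of \<open>Y\<close> with \<open>c p = p\<close>
  (maps composed on the right, i.e. \<open>p (c y) = p y\<close>).\<close>

definition CT :: "'b graph \<Rightarrow> ('b \<Rightarrow> 'a) \<Rightarrow> ('b \<Rightarrow> 'b) set" where
  "CT Y p = {c \<in> aut Y. \<forall>y\<in>verts Y. p (c y) = p y}"

definition regular_covering :: "'b graph \<Rightarrow> 'a graph \<Rightarrow> ('b \<Rightarrow> 'a) \<Rightarrow> bool" where
  "regular_covering Y X p \<longleftrightarrow> covering Y X p \<and>
     (\<forall>y\<in>verts Y. \<forall>y'\<in>verts Y. p y = p y' \<longrightarrow> (\<exists>!c. c \<in> CT Y p \<and> c y = y'))"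

definition two_cover :: "'b graph \<Rightarrow> 'a graph \<Rightarrow> ('b \<Rightarrow> 'a) \<Rightarrow> bool" where
  "two_cover Y X p \<longleftrightarrow> regular_covering Y X p \<and> card (CT Y p) = 2"

text \<open>Lifts: \<open>p g = g' p\<close> with right composition, i.e. \<open>p (g' y) = g (p y)\<close>.\<close>

definition is_lift :: "'b graph \<Rightarrow> ('b \<Rightarrow> 'a) \<Rightarrow> ('a \<Rightarrow> 'a) \<Rightarrow> ('b \<Rightarrow> 'b) \<Rightarrow> bool" where
  "is_lift Y p g g' \<longleftrightarrow> g' \<in> aut Y \<and> (\<forall>y\<in>verts Y. p (g' y) = g (p y))"

definition lift_group :: "'b graph \<Rightarrow> ('b \<Rightarrow> 'a) \<Rightarrow> ('a \<Rightarrow> 'a) set \<Rightarrow> ('b \<Rightarrow> 'b) set" where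
  "lift_group Y p G = {g'. \<exists>g\<in>G. is_lift Y p g g'}"

definition has_complement :: "('b \<Rightarrow> 'b) set \<Rightarrow> ('b \<Rightarrow> 'b) set \<Rightarrow> bool" where
  "has_complement H K \<longleftrightarrow> (\<exists>C. C \<subseteq> H \<and> perm_group C \<and> C \<inter> K = {id}
      \<and> (\<forall>g\<in>H. \<exists>h\<in>C. \<exists>k\<in>K. g = h \<circ> k))"

text \<open>One step of a split-admissible chain: \<open>p : Y \<rightarrow> X\<close> is a 2-cover along which
  every element of \<open>G\<close> lifts (so \<open>CT \<rightarrow> lift \<rightarrow> G\<close> is an extension), and the
  extension splits.\<close>

definition split_step :: "'a graph \<Rightarrow> ('a \<Rightarrow> 'a) set \<Rightarrow> 'b graph \<Rightarrow> ('b \<Rightarrow> 'a) \<Rightarrow> bool" where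
  "split_step X G Y p \<longleftrightarrow> two_cover Y X p
     \<and> (\<forall>g\<in>G. \<exists>g'. is_lift Y p g g')
     \<and> has_complement (lift_group Y p G) (CT Y p)"

text \<open>Chains of covers; covering graphs are (up to isomorphism) taken with vertices in \<open>nat\<close>
  (every cover of a finite graph in a 2-cover chain is finite).\<close>

fun split_chain_nat :: "nat graph \<Rightarrow> (nat \<Rightarrow> nat) set \<Rightarrow> nat \<Rightarrow> bool" where
  "split_chain_nat X G 0 = True"
| "split_chain_nat X G (Suc n) =
     (\<exists>(Y :: nat graph) p. split_step X G Y p \<and> split_chain_nat Y (lift_group Y p G) n)"

definition split_admissible_chain :: "'a graph \<Rightarrow> ('a \<Rightarrow> 'a) set \<Rightarrow> nat \<Rightarrow> bool" where
  "split_admissible_chain X G n \<longleftrightarrow> n = 0 \<or>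
     (\<exists>m (Y :: nat graph) p. n = Suc m \<and> split_step X G Y p
        \<and> split_chain_nat Y (lift_group Y p G) m)"

text \<open>Split-length is finite: the lengths of split-admissible chains are bounded
  (the length-0 chain always exists, so then the largest length exists).\<close>

definition split_length_finite :: "'a graph \<Rightarrow> ('a \<Rightarrow> 'a) set \<Rightarrow> bool" where
  "split_length_finite X G \<longleftrightarrow> finite {n. split_admissible_chain X G n}"

end

theory Submission
  imports Defs "HOL-Library.FuncSet"
begin

text \<open>Write \<open>Hom(H)\<close> for the homomorphisms \<open>H \<rightarrow> \<int>\<^sub>2\<close>. A group \<open>H\<close> acting
  arc-transitively on a connected graph is generated by a vertex stabiliser \<open>H\<^sub>v\<close> together with
  one element moving \<open>v\<close> to a neighbour, so \<open>|Hom(H)| \<le> 2\<^bsup>|H\<^sub>v| + 1\<^esup>\<close>.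
  In a split 2-cover the covering group \<open>K \<cong> \<int>\<^sub>2\<close> is normal, hence central, in the lifted
  group \<open>L\<close>, and a complement \<open>C\<close> gives \<open>L \<cong> C \<times> K\<close> with \<open>C \<cong> G\<close>; thus
  \<open>|Hom(L)| \<ge> 2 |Hom(G)|\<close>. Since \<open>K\<close> acts semiregularly, vertex stabilisers in \<open>L\<close> embed
  into those of \<open>G\<close>. Along a split-admissible chain of length \<open>n\<close> this gives
  \<open>2\<^sup>n \<le> 2\<^sup>n |Hom(G)| \<le> |Hom(G\<^sub>n)| \<le> 2\<^bsup>|G\<^sub>v| + 1\<^esup>\<close>.\<close>

section \<open>Automorphisms and permutation groups\<close>

lemma aut_mapsto: "f \<in> aut X \<Longrightarrow> x \<in> verts X \<Longrightarrow> f x \<in> verts X"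
  unfolding aut_def bij_betw_def by auto

lemma aut_fixes_outside: "f \<in> aut X \<Longrightarrow> x \<notin> verts X \<Longrightarrow> f x = x"
  unfolding aut_def by auto

lemma aut_arcs_iff:
  "f \<in> aut X \<Longrightarrow> u \<in> verts X \<Longrightarrow> v \<in> verts X \<Longrightarrow> (f u, f v) \<in> arcs X \<longleftrightarrow> (u, v) \<in> arcs X"
  unfolding aut_def by auto

lemma autI:
  assumes "bij_betw f (verts X) (verts X)" and "\<And>x. x \<notin> verts X \<Longrightarrow> f x = x"
    and "\<And>u v. u \<in> verts X \<Longrightarrow> v \<in> verts X \<Longrightarrow> (f u, f v) \<in> arcs X \<longleftrightarrow> (u, v) \<in> arcs X"
  shows "f \<in> aut X"
  using assms unfolding aut_def by auto

lemma id_in_aut: "id \<in> aut X"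
  unfolding aut_def by auto

lemma aut_imp_bij:
  assumes "f \<in> aut X" shows "bij f"
proof -
  have "bij_betw f (- verts X) (- verts X)"
    using bij_betw_id by (rule bij_betw_cong[THEN iffD1, rotated]) (simp add: aut_fixes_outside[OF assms])
  with assms have "bij_betw f (verts X \<union> - verts X) (verts X \<union> - verts X)"
    unfolding aut_def by (blast intro: bij_betw_combine)
  then show ?thesis by simp
qed

lemma aut_comp_closed:
  assumes f: "f \<in> aut X" and g: "g \<in> aut X" shows "f \<circ> g \<in> aut X"
proof (rule autI)
  show "bij_betw (f \<circ> g) (verts X) (verts X)"
    using f g unfolding aut_def by (auto intro: bij_betw_trans)
  show "(f \<circ> g) x = x" if "x \<notin> verts X" for x
    by (simp add: aut_fixes_outside[OF f that] aut_fixes_outside[OF g that])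
qed (simp add: aut_arcs_iff aut_mapsto f g)

lemma inv_in_aut:
  assumes f: "f \<in> aut X" shows "inv f \<in> aut X"
proof (rule autI)
  have "bij f" by (rule aut_imp_bij[OF f])
  moreover have "f ` verts X = verts X" using f unfolding aut_def bij_betw_def by auto
  ultimately show inv: "bij_betw (inv f) (verts X) (verts X)"
    using bij_betw_inv_into_subset[of f UNIV UNIV "verts X" "verts X"] by simp
  show "inv f x = x" if "x \<notin> verts X" for x
    by (rule inv_f_eq[OF bij_is_inj[OF \<open>bij f\<close>] aut_fixes_outside[OF f that]])
  show "(inv f u, inv f v) \<in> arcs X \<longleftrightarrow> (u, v) \<in> arcs X"
    if "u \<in> verts X" "v \<in> verts X" for u v
    using aut_arcs_iff[OF f, of "inv f u" "inv f v"] bij_betw_apply[OF inv] that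
      surj_f_inv_f[OF bij_is_surj[OF \<open>bij f\<close>]]
    by simp
qed

lemma aut_comp_inv: "f \<in> aut X \<Longrightarrow> f \<circ> inv f = id"
  using surj_iff bij_is_surj aut_imp_bij by metis

lemma aut_inv_comp: "f \<in> aut X \<Longrightarrow> inv f \<circ> f = id"
  using inj_iff bij_is_inj aut_imp_bij by metis

lemma finite_aut:
  assumes "finite (verts X)" shows "finite (aut X)"
proof -
  have "inj_on (\<lambda>f. restrict f (verts X)) (aut X)"
  proof (rule inj_onI, rule ext)
    fix f g x assume "f \<in> aut X" "g \<in> aut X" "restrict f (verts X) = restrict g (verts X)"
    then show "f x = g x"
      by (cases "x \<in> verts X") (auto dest: fun_cong[of _ _ x] simp: aut_fixes_outside)
  qed
  moreover have "(\<lambda>f. restrict f (verts X)) ` aut X \<subseteq> verts X \<rightarrow>\<^sub>E verts X"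
    using aut_mapsto by fastforce
  ultimately show ?thesis
    using assms by (meson finite_PiE finite_imageD finite_subset)
qed

lemma perm_group_id: "perm_group H \<Longrightarrow> id \<in> H"
  unfolding perm_group_def by auto

lemma perm_group_comp: "perm_group H \<Longrightarrow> x \<in> H \<Longrightarrow> y \<in> H \<Longrightarrow> x \<circ> y \<in> H"
  unfolding perm_group_def by auto

lemma perm_group_inv: "perm_group H \<Longrightarrow> x \<in> H \<Longrightarrow> \<exists>y\<in>H. x \<circ> y = id \<and> y \<circ> x = id"
  unfolding perm_group_def by auto

lemma perm_group_cancel_left:
  assumes H: "perm_group H" and "x \<in> H" "x \<circ> y \<in> H" shows "y \<in> H"
proof -
  obtain x' where "x' \<in> H" "x' \<circ> x = id" using perm_group_inv[OF H \<open>x \<in> H\<close>] by blast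
  then have "x' \<circ> (x \<circ> y) = y" by (simp flip: comp_assoc)
  with perm_group_comp[OF H \<open>x' \<in> H\<close> \<open>x \<circ> y \<in> H\<close>] show ?thesis by simp
qed

definition stab :: "('b \<Rightarrow> 'b) set \<Rightarrow> 'b \<Rightarrow> ('b \<Rightarrow> 'b) set" where
  "stab H v = {h \<in> H. h v = v}"

section \<open>Homomorphisms into \<open>\<int>\<^sub>2\<close>\<close>

text \<open>\<open>\<int>\<^sub>2\<close> is encoded as \<open>bool\<close> under exclusive or (\<open>\<noteq>\<close>); taking the homomorphisms
  extensional makes \<open>hom_Z2 H\<close> finite for finite \<open>H\<close>.\<close>

definition hom_Z2 :: "('b \<Rightarrow> 'b) set \<Rightarrow> (('b \<Rightarrow> 'b) \<Rightarrow> bool) set" where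
  "hom_Z2 H = {\<chi> \<in> extensional H. \<forall>x\<in>H. \<forall>y\<in>H. \<chi> (x \<circ> y) = (\<chi> x \<noteq> \<chi> y)}"

lemma hom_Z2_comp: "\<chi> \<in> hom_Z2 H \<Longrightarrow> x \<in> H \<Longrightarrow> y \<in> H \<Longrightarrow> \<chi> (x \<circ> y) = (\<chi> x \<noteq> \<chi> y)"
  unfolding hom_Z2_def by auto

lemma hom_Z2_id: "perm_group H \<Longrightarrow> \<chi> \<in> hom_Z2 H \<Longrightarrow> \<not> \<chi> id"
  using hom_Z2_comp[of \<chi> H id id] perm_group_id by fastforce

lemma hom_Z2_inv:
  "perm_group H \<Longrightarrow> \<chi> \<in> hom_Z2 H \<Longrightarrow> x \<in> H \<Longrightarrow> y \<in> H \<Longrightarrow> x \<circ> y = id \<Longrightarrow> \<chi> y = \<chi> x"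
  using hom_Z2_comp[of \<chi> H x y] hom_Z2_id[of H \<chi>] by auto

lemma hom_Z2_outside: "\<chi> \<in> hom_Z2 H \<Longrightarrow> x \<notin> H \<Longrightarrow> \<chi> x = undefined"
  unfolding hom_Z2_def extensional_def by auto

lemma hom_Z2_eqI:
  assumes "\<chi> \<in> hom_Z2 H" "\<chi>' \<in> hom_Z2 H" "\<And>x. x \<in> H \<Longrightarrow> \<chi> x = \<chi>' x"
  shows "\<chi> = \<chi>'"
proof
  fix x show "\<chi> x = \<chi>' x"
    using hom_Z2_outside[OF assms(1)] hom_Z2_outside[OF assms(2)] assms(3) by (cases "x \<in> H") auto
qed

lemma finite_hom_Z2: "finite H \<Longrightarrow> finite (hom_Z2 H)"
proof -
  assume "finite H"
  then have "finite (H \<rightarrow>\<^sub>E (UNIV :: bool set))" by (simp add: finite_PiE)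
  moreover have "hom_Z2 H \<subseteq> H \<rightarrow>\<^sub>E (UNIV :: bool set)" unfolding hom_Z2_def PiE_def by auto
  ultimately show ?thesis by (rule finite_subset[rotated])
qed

lemma card_hom_Z2_pos:
  assumes "finite H" "perm_group H" shows "0 < card (hom_Z2 H)"
proof -
  have "restrict (\<lambda>_. False) H \<in> hom_Z2 H"
    unfolding hom_Z2_def using perm_group_comp[OF assms(2)] by auto
  then have "hom_Z2 H \<noteq> {}" by blast
  with finite_hom_Z2[OF assms(1)] show ?thesis by (simp add: card_gt_0_iff)
qed

lemma perm_group_equalizer:
  assumes H: "perm_group H" and \<chi>: "\<chi> \<in> hom_Z2 H" and \<chi>': "\<chi>' \<in> hom_Z2 H"
  shows "perm_group {h \<in> H. \<chi> h = \<chi>' h}"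
  unfolding perm_group_def
proof (intro conjI ballI)
  show "id \<in> {h \<in> H. \<chi> h = \<chi>' h}"
    using perm_group_id[OF H] hom_Z2_id[OF H \<chi>] hom_Z2_id[OF H \<chi>'] by simp
next
  fix f g assume f: "f \<in> {h \<in> H. \<chi> h = \<chi>' h}" and g: "g \<in> {h \<in> H. \<chi> h = \<chi>' h}"
  then show "f \<circ> g \<in> {h \<in> H. \<chi> h = \<chi>' h}"
    using hom_Z2_comp[OF \<chi>, of f g] hom_Z2_comp[OF \<chi>', of f g] perm_group_comp[OF H, of f g] by simp
next
  fix f assume f: "f \<in> {h \<in> H. \<chi> h = \<chi>' h}"
  then obtain g where g: "g \<in> H" "f \<circ> g = id" "g \<circ> f = id" using perm_group_inv[OF H, of f] by auto
  with f have "\<chi> g = \<chi>' g" using hom_Z2_inv[OF H \<chi>, of f g] hom_Z2_inv[OF H \<chi>', of f g] by simp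
  with g show "\<exists>g\<in>{h \<in> H. \<chi> h = \<chi>' h}. f \<circ> g = id \<and> g \<circ> f = id" by blast
qed

lemma subgroup_containing_stab_eq:
  assumes Y: "graph Y" "connected_graph Y" and H: "H \<subseteq> aut Y" "perm_group H"
    and v: "v \<in> verts Y" and mover: "\<And>x. (v, x) \<in> arcs Y \<Longrightarrow> \<exists>h\<in>stab H v. h (a v) = x"
    and S: "perm_group S" "S \<subseteq> H" "stab H v \<subseteq> S" "a \<in> S"
  shows "S = H"
proof -
  have orbit: "\<exists>s\<in>S. s v = u" if "(v, u) \<in> (arcs Y)\<^sup>*" for u
    using that
  proof (induction rule: rtrancl_induct)
    case base
    show ?case using perm_group_id[OF S(1)] by (intro bexI[of _ id]) auto
  next
    case (step u w)
    then obtain s where s: "s \<in> S" "s v = u" by blast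
    obtain s' where s': "s' \<in> S" "s \<circ> s' = id" "s' \<circ> s = id"
      using perm_group_inv[OF S(1) s(1)] by blast
    have s'_aut: "s' \<in> aut Y" using s'(1) S(2) H(1) by blast
    have "u \<in> verts Y" "w \<in> verts Y" using step(2) Y(1) unfolding graph_def by auto
    then have "(s' u, s' w) \<in> arcs Y" using aut_arcs_iff[OF s'_aut] step(2) by simp
    moreover have "s' u = v" using s(2) s'(3) by (metis comp_apply id_apply)
    ultimately obtain h where h: "h \<in> stab H v" "h (a v) = s' w" using mover by force
    have "s \<circ> h \<circ> a \<in> S" using perm_group_comp[OF S(1)] s(1) h(1) S(3,4) by blast
    moreover have "(s \<circ> h \<circ> a) v = w" using h(2) s'(2) by (metis comp_apply id_apply)
    ultimately show ?case by blast
  qed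
  have "h \<in> S" if h: "h \<in> H" for h
  proof -
    have "h \<in> aut Y" using h H(1) by blast
    then have "(v, h v) \<in> (arcs Y)\<^sup>*"
      using aut_mapsto[of h Y v] v Y(2) unfolding connected_graph_def by blast
    then obtain s where s: "s \<in> S" "s v = h v" using orbit by blast
    obtain s' where s': "s' \<in> S" "s \<circ> s' = id" "s' \<circ> s = id"
      using perm_group_inv[OF S(1) s(1)] by blast
    have "s' \<circ> h \<in> H" using perm_group_comp[OF H(2)] s'(1) S(2) h by blast
    moreover have "(s' \<circ> h) v = v" using s(2) s'(3) by (metis comp_apply id_apply)
    ultimately have "s' \<circ> h \<in> stab H v" unfolding stab_def by blast
    then have "s \<circ> (s' \<circ> h) \<in> S" using perm_group_comp[OF S(1) s(1)] S(3) by blast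
    then show ?thesis using s'(2) by (simp flip: comp_assoc)
  qed
  then show ?thesis using S(2) by blast
qed

lemma arc_transitive_mover:
  assumes "graph Y" "arc_transitive Y H" "perm_group H"
  shows "\<exists>a\<in>H. \<forall>x. (v, x) \<in> arcs Y \<longrightarrow> (\<exists>h\<in>stab H v. h (a v) = x)"
proof (cases "\<exists>w. (v, w) \<in> arcs Y")
  case True
  then obtain w where vw: "(v, w) \<in> arcs Y" by blast
  then have "(w, v) \<in> arcs Y" using assms(1) unfolding graph_def sym_def by blast
  then obtain a where "a \<in> H" "a w = v" "a v = w"
    using assms(2) vw unfolding arc_transitive_def by fast
  moreover have "\<exists>h\<in>stab H v. h w = x" if "(v, x) \<in> arcs Y" for x
    using assms(2) vw that unfolding arc_transitive_def stab_def by fast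
  ultimately show ?thesis by metis
qed (use perm_group_id[OF assms(3)] in blast)

text \<open>An arc-transitive group is generated by a vertex stabiliser and one element moving the vertex
  to a neighbour, so a homomorphism into \<open>\<int>\<^sub>2\<close> is determined by its values there.\<close>

lemma card_hom_Z2_le_stab:
  assumes Y: "graph Y" "connected_graph Y" and H: "H \<subseteq> aut Y" "perm_group H" "arc_transitive Y H"
    and v: "v \<in> verts Y"
  shows "card (hom_Z2 H) \<le> 2 * 2 ^ card (stab H v)"
proof -
  obtain a where a: "a \<in> H" "\<And>x. (v, x) \<in> arcs Y \<Longrightarrow> \<exists>h\<in>stab H v. h (a v) = x"
    using arc_transitive_mover[OF Y(1) H(3,2)] by blast
  have fin: "finite (stab H v)"
    using finite_aut Y(1) H(1) unfolding graph_def stab_def by (auto intro: finite_subset)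
  let ?\<Phi> = "\<lambda>\<chi>. (restrict \<chi> (stab H v), \<chi> a)"
  have "inj_on ?\<Phi> (hom_Z2 H)"
  proof (rule inj_onI)
    fix \<chi> \<chi>' assume \<chi>: "\<chi> \<in> hom_Z2 H" and \<chi>': "\<chi>' \<in> hom_Z2 H" and eq: "?\<Phi> \<chi> = ?\<Phi> \<chi>'"
    have "{h \<in> H. \<chi> h = \<chi>' h} = H"
    proof (rule subgroup_containing_stab_eq[of Y H v a, OF Y H(1,2) v a(2)
          perm_group_equalizer[OF H(2) \<chi> \<chi>']])
      show "stab H v \<subseteq> {h \<in> H. \<chi> h = \<chi>' h}"
      proof
        fix h assume h: "h \<in> stab H v"
        have "restrict \<chi> (stab H v) h = restrict \<chi>' (stab H v) h" using eq by simp
        with h show "h \<in> {h \<in> H. \<chi> h = \<chi>' h}" unfolding stab_def by simp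
      qed
    qed (use eq a(1) in auto)
    then show "\<chi> = \<chi>'" using hom_Z2_eqI[OF \<chi> \<chi>'] by blast
  qed
  then have "card (hom_Z2 H) = card (?\<Phi> ` hom_Z2 H)" by (rule card_image[symmetric])
  also have "\<dots> \<le> card ((stab H v \<rightarrow>\<^sub>E (UNIV :: bool set)) \<times> (UNIV :: bool set))"
    by (rule card_mono) (use fin in \<open>auto simp: finite_PiE\<close>)
  also have "\<dots> = 2 * 2 ^ card (stab H v)"
    using fin by (simp add: card_cartesian_product card_funcsetE)
  finally show ?thesis .
qed

text \<open>Pulling back along \<open>\<pi>\<close> and adding \<open>\<psi>\<close>, which is nontrivial on the kernel of \<open>\<pi>\<close>,
  embeds \<open>hom_Z2 G \<times> \<int>\<^sub>2\<close> into \<open>hom_Z2 L\<close>.\<close>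

lemma card_hom_Z2_double:
  assumes G: "perm_group G" and L: "perm_group L" "finite L"
    and \<pi>: "\<And>h. h \<in> L \<Longrightarrow> \<pi> h \<in> G" "G \<subseteq> \<pi> ` L"
      "\<And>h h'. h \<in> L \<Longrightarrow> h' \<in> L \<Longrightarrow> \<pi> (h \<circ> h') = \<pi> h \<circ> \<pi> h'"
    and \<psi>: "\<psi> \<in> hom_Z2 L" and k: "k \<in> L" "\<pi> k = id" "\<psi> k"
  shows "2 * card (hom_Z2 G) \<le> card (hom_Z2 L)"
proof -
  define \<Phi> where "\<Phi> = (\<lambda>(\<chi>, b). restrict (\<lambda>h. \<chi> (\<pi> h) \<noteq> (b \<and> \<psi> h)) L)"
  have \<Phi>_hom: "\<Phi> (\<chi>, b) \<in> hom_Z2 L" if \<chi>: "\<chi> \<in> hom_Z2 G" for \<chi> b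
    unfolding hom_Z2_def
  proof (intro CollectI conjI ballI)
    show "\<Phi> (\<chi>, b) \<in> extensional L" unfolding \<Phi>_def by simp
    fix h h' assume "h \<in> L" "h' \<in> L"
    then show "\<Phi> (\<chi>, b) (h \<circ> h') = (\<Phi> (\<chi>, b) h \<noteq> \<Phi> (\<chi>, b) h')"
      unfolding \<Phi>_def using perm_group_comp[OF L(1)] \<pi>(1,3) hom_Z2_comp[OF \<chi>] hom_Z2_comp[OF \<psi>]
      by auto
  qed
  have "inj_on \<Phi> (hom_Z2 G \<times> UNIV)"
  proof (rule inj_onI, clarify)
    fix \<chi> b \<chi>' b' assume \<chi>: "\<chi> \<in> hom_Z2 G" and \<chi>': "\<chi>' \<in> hom_Z2 G" and eq: "\<Phi> (\<chi>, b) = \<Phi> (\<chi>', b')"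
    have at: "(\<chi> (\<pi> h) \<noteq> (b \<and> \<psi> h)) = (\<chi>' (\<pi> h) \<noteq> (b' \<and> \<psi> h))" if "h \<in> L" for h
      using fun_cong[OF eq, of h] that unfolding \<Phi>_def by simp
    show "\<chi> = \<chi>' \<and> b = b'"
    proof
      show "b = b'" using at[OF k(1)] k(2,3) hom_Z2_id[OF G \<chi>] hom_Z2_id[OF G \<chi>'] by simp
      show "\<chi> = \<chi>'"
      proof (rule hom_Z2_eqI[OF \<chi> \<chi>'])
        fix g assume "g \<in> G"
        then obtain h where "h \<in> L" "g = \<pi> h" using \<pi>(2) by blast
        then show "\<chi> g = \<chi>' g" using at \<open>b = b'\<close> by auto
      qed
    qed
  qed
  then have "card (hom_Z2 G) * 2 = card (\<Phi> ` (hom_Z2 G \<times> UNIV))"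
    by (simp add: card_image card_cartesian_product)
  also have "\<dots> \<le> card (hom_Z2 L)"
    using \<Phi>_hom finite_hom_Z2[OF L(2)] by (intro card_mono) auto
  finally show ?thesis by simp
qed

text \<open>Membership in the complement \<open>C\<close> is read off from the \<open>K\<close>-component \<open>e\<close> of \<open>h = a \<circ> e\<close>,
  which is additive because \<open>K = {id, c}\<close> is central.\<close>

lemma complement_indicator_hom_Z2:
  assumes L: "perm_group L"
    and C: "perm_group C" "C \<subseteq> L" "C \<inter> K = {id}" "\<forall>h\<in>L. \<exists>a\<in>C. \<exists>e\<in>K. h = a \<circ> e"
    and K: "K = {id, c}" "c \<circ> c = id" "\<And>h. h \<in> L \<Longrightarrow> h \<circ> c = c \<circ> h"
  shows "restrict (\<lambda>h. h \<notin> C) L \<in> hom_Z2 L"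
proof -
  have parity: "h \<notin> C \<longleftrightarrow> e \<noteq> id" if h: "h = a \<circ> e" and a: "a \<in> C" and e: "e \<in> K" for h a e
  proof
    assume "h \<notin> C"
    then show "e \<noteq> id" using a h by auto
  next
    assume "e \<noteq> id"
    show "h \<notin> C"
    proof
      assume "h \<in> C"
      then have "e \<in> C \<inter> K" using perm_group_cancel_left[OF C(1) a] h e by simp
      with C(3) \<open>e \<noteq> id\<close> show False by blast
    qed
  qed
  have "(h \<circ> h' \<notin> C) = ((h \<notin> C) \<noteq> (h' \<notin> C))" if "h \<in> L" "h' \<in> L" for h h'
  proof -
    obtain a e a' e' where ae: "a \<in> C" "e \<in> K" "h = a \<circ> e" and ae': "a' \<in> C" "e' \<in> K" "h' = a' \<circ> e'"
      using C(4) \<open>h \<in> L\<close> \<open>h' \<in> L\<close> by meson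
    have e_cases: "e = id \<or> e = c" "e' = id \<or> e' = c" using ae(2) ae'(2) K(1) by blast+
    have "a' \<in> L" using C(2) ae'(1) by blast
    then have "e (a' x) = a' (e x)" for x
      using e_cases(1) fun_cong[OF K(3), of a' x] by auto
    then have "h \<circ> h' = (a \<circ> a') \<circ> (e \<circ> e')" using ae(3) ae'(3) by (simp add: fun_eq_iff)
    moreover have "e \<circ> e' \<in> K" "(e \<circ> e' \<noteq> id) = ((e \<noteq> id) \<noteq> (e' \<noteq> id))"
      using e_cases K(1,2) by auto
    moreover have "a \<circ> a' \<in> C" by (rule perm_group_comp[OF C(1) ae(1) ae'(1)])
    ultimately have "h \<circ> h' \<notin> C \<longleftrightarrow> (e \<noteq> id) \<noteq> (e' \<noteq> id)" using parity by simp
    then show ?thesis using parity[OF ae(3,1,2)] parity[OF ae'(3,1,2)] by simp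
  qed
  then show ?thesis unfolding hom_Z2_def using perm_group_comp[OF L] by auto
qed

section \<open>Lifting along a 2-cover\<close>

lemma is_lift_id: "is_lift Y p id id"
  unfolding is_lift_def by (simp add: id_in_aut)

lemma is_lift_comp:
  assumes "is_lift Y p g h" "is_lift Y p g' h'" shows "is_lift Y p (g \<circ> g') (h \<circ> h')"
  unfolding is_lift_def
proof (intro conjI ballI)
  have "h \<in> aut Y" "h' \<in> aut Y" using assms unfolding is_lift_def by blast+
  then show "h \<circ> h' \<in> aut Y" by (rule aut_comp_closed)
  fix y assume "y \<in> verts Y"
  with aut_mapsto[OF \<open>h' \<in> aut Y\<close> this] show "p ((h \<circ> h') y) = (g \<circ> g') (p y)"
    using assms unfolding is_lift_def by simp
qed

lemma is_lift_inv:
  assumes gh: "is_lift Y p g h" and g': "g' \<circ> g = id" shows "is_lift Y p g' (inv h)"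
  unfolding is_lift_def
proof (intro conjI ballI)
  have h: "h \<in> aut Y" using gh unfolding is_lift_def by blast
  then show "inv h \<in> aut Y" by (rule inv_in_aut)
  fix y assume y: "y \<in> verts Y"
  then have "p (h (inv h y)) = g (p (inv h y))"
    using gh aut_mapsto[OF inv_in_aut[OF h] y] unfolding is_lift_def by blast
  then have "g' (p y) = g' (g (p (inv h y)))" using aut_comp_inv[OF h] by (metis comp_apply id_apply)
  then show "p (inv h y) = g' (p y)" using g' by (metis comp_apply id_apply)
qed

lemma lift_unique:
  assumes "covering Y X p" "g \<in> aut X" "g' \<in> aut X" "is_lift Y p g h" "is_lift Y p g' h"
  shows "g = g'"
proof
  fix x show "g x = g' x"
  proof (cases "x \<in> verts X")
    case True
    then obtain y where "y \<in> verts Y" "x = p y" using assms(1) unfolding covering_def by blast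
    then show ?thesis using assms(4,5) unfolding is_lift_def by metis
  qed (simp add: aut_fixes_outside[OF assms(2)] aut_fixes_outside[OF assms(3)])
qed

lemma lift_groupI: "g \<in> G \<Longrightarrow> is_lift Y p g h \<Longrightarrow> h \<in> lift_group Y p G"
  unfolding lift_group_def by blast

lemma CT_iff_is_lift_id: "c \<in> CT Y p \<longleftrightarrow> is_lift Y p id c"
  unfolding CT_def is_lift_def by simp

locale lifting_two_cover =
  fixes X :: "'a graph" and G :: "('a \<Rightarrow> 'a) set" and Y :: "'b graph" and p :: "'b \<Rightarrow> 'a"
  assumes two_cover: "two_cover Y X p" and G_aut: "G \<subseteq> aut X" and G_group: "perm_group G"
    and G_lifts: "\<forall>g\<in>G. \<exists>h. is_lift Y p g h"
begin

abbreviation L where "L \<equiv> lift_group Y p G"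
abbreviation K where "K \<equiv> CT Y p"

definition proj :: "('b \<Rightarrow> 'b) \<Rightarrow> 'a \<Rightarrow> 'a" where
  "proj h = (THE g. g \<in> G \<and> is_lift Y p g h)"

lemma covering: "covering Y X p"
  using two_cover unfolding two_cover_def regular_covering_def by blast

lemma graph_Y: "graph Y" and connected_Y: "connected_graph Y"
  using covering unfolding covering_def by blast+

lemma CT_unique: "y \<in> verts Y \<Longrightarrow> y' \<in> verts Y \<Longrightarrow> p y = p y' \<Longrightarrow> \<exists>!c. c \<in> K \<and> c y = y'"
  using two_cover unfolding two_cover_def regular_covering_def by blast

lemma L_aut: "h \<in> L \<Longrightarrow> h \<in> aut Y"
  unfolding lift_group_def is_lift_def by blast

lemma proj_eq: assumes "g \<in> G" "is_lift Y p g h" shows "proj h = g"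
  unfolding proj_def
proof (rule the_equality)
  show "g' = g" if "g' \<in> G \<and> is_lift Y p g' h" for g'
    using lift_unique[OF covering, of g' g h] that assms G_aut by blast
qed (use assms in blast)

lemma proj_in_G: "h \<in> L \<Longrightarrow> proj h \<in> G"
  and is_lift_proj: "h \<in> L \<Longrightarrow> is_lift Y p (proj h) h"
  unfolding lift_group_def using proj_eq by auto

lemma proj_comp: assumes "h \<in> L" "h' \<in> L" shows "proj (h \<circ> h') = proj h \<circ> proj h'"
  using assms by (intro proj_eq perm_group_comp[OF G_group] is_lift_comp proj_in_G is_lift_proj)

lemma G_subset_proj_L: "G \<subseteq> proj ` L"
proof
  fix g assume "g \<in> G"
  then obtain h where "is_lift Y p g h" using G_lifts by blast
  with \<open>g \<in> G\<close> show "g \<in> proj ` L" using proj_eq lift_groupI by (intro image_eqI) auto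
qed

lemma perm_group_L: "perm_group L"
  unfolding perm_group_def
proof (intro conjI ballI)
  show "id \<in> L" by (rule lift_groupI[OF perm_group_id[OF G_group] is_lift_id])
  show "h \<circ> h' \<in> L" if h: "h \<in> L" and h': "h' \<in> L" for h h'
    using lift_groupI[OF perm_group_comp[OF G_group proj_in_G[OF h] proj_in_G[OF h']]
        is_lift_comp[OF is_lift_proj[OF h] is_lift_proj[OF h']]] .
  show "\<exists>h'\<in>L. h \<circ> h' = id \<and> h' \<circ> h = id" if h: "h \<in> L" for h
  proof (intro bexI conjI)
    obtain g' where "g' \<in> G" "g' \<circ> proj h = id"
      using perm_group_inv[OF G_group proj_in_G[OF h]] by blast
    then show "inv h \<in> L" by (intro lift_groupI is_lift_inv[OF is_lift_proj[OF h]])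
    show "h \<circ> inv h = id" "inv h \<circ> h = id"
      using aut_comp_inv[OF L_aut[OF h]] aut_inv_comp[OF L_aut[OF h]] by simp_all
  qed
qed

lemma finite_L: "finite L"
proof (rule finite_subset)
  show "L \<subseteq> aut Y" using L_aut by blast
  show "finite (aut Y)" using finite_aut graph_Y unfolding graph_def by blast
qed

lemma CT_subset_L: "K \<subseteq> L"
  using lift_groupI[OF perm_group_id[OF G_group]] CT_iff_is_lift_id by blast

lemma proj_CT: "c \<in> K \<Longrightarrow> proj c = id"
  using proj_eq[OF perm_group_id[OF G_group]] CT_iff_is_lift_id by blast

lemma CT_fixes_vertex_imp_id: assumes "c \<in> K" "y \<in> verts Y" "c y = y" shows "c = id"
proof -
  have "id \<in> K" by (simp add: CT_iff_is_lift_id is_lift_id)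
  then show ?thesis using CT_unique[OF assms(2) assms(2) refl] assms(1,3) by auto
qed

lemma CT_conj: assumes "h \<in> L" "c \<in> K" shows "h \<circ> c \<circ> inv h \<in> K"
proof -
  obtain g' where g': "g' \<in> G" "proj h \<circ> g' = id" "g' \<circ> proj h = id"
    using perm_group_inv[OF G_group proj_in_G[OF assms(1)]] by blast
  have "is_lift Y p (proj h \<circ> id \<circ> g') (h \<circ> c \<circ> inv h)"
    using assms CT_iff_is_lift_id is_lift_proj is_lift_inv[OF is_lift_proj g'(3)]
    by (blast intro: is_lift_comp)
  then show ?thesis using g'(2) by (simp add: CT_iff_is_lift_id)
qed

lemma CT_eq_pair: obtains c where "c \<noteq> id" "K = {id, c}"
proof -
  have "card K = 2" using two_cover unfolding two_cover_def by blast
  then obtain a b where "K = {a, b}" "a \<noteq> b" by (meson card_2_iff)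
  moreover have "id \<in> K" by (simp add: CT_iff_is_lift_id is_lift_id)
  ultimately show ?thesis
  proof (cases "a = id")
    case False
    then have "K = {id, a}" using \<open>id \<in> K\<close> \<open>K = {a, b}\<close> by auto
    with False show ?thesis by (rule that)
  qed (use \<open>K = {a, b}\<close> \<open>a \<noteq> b\<close> in \<open>auto intro: that[of b]\<close>)
qed

lemma CT_central: assumes h: "h \<in> L" and c: "c \<in> K" shows "h \<circ> c = c \<circ> h"
proof -
  obtain c0 where c0: "c0 \<noteq> id" "K = {id, c0}" by (rule CT_eq_pair)
  have h_aut: "h \<in> aut Y" by (rule L_aut[OF h])
  have "h \<circ> c \<circ> inv h = c"
  proof (cases "c = id")
    case True
    then show ?thesis using aut_comp_inv[OF h_aut] by simp
  next
    case False
    have "h \<circ> c \<circ> inv h \<noteq> id"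
    proof
      assume conj_id: "h \<circ> c \<circ> inv h = id"
      have "h (c (inv h (h x))) = h x" for x using fun_cong[OF conj_id, of "h x"] by simp
      then have "c x = x" for x using bij_is_inj[OF aut_imp_bij[OF h_aut]] by (simp add: inj_eq)
      with False show False by auto
    qed
    then show ?thesis using CT_conj[OF h c] c c0(2) False by blast
  qed
  then have "h \<circ> c \<circ> (inv h \<circ> h) = c \<circ> h" by (simp flip: comp_assoc)
  then show ?thesis using aut_inv_comp[OF h_aut] by simp
qed

lemma CT_involution: assumes c: "c \<in> K" shows "c \<circ> c = id"
proof (cases "c = id")
  case False
  obtain c0 where c0: "c0 \<noteq> id" "K = {id, c0}" by (rule CT_eq_pair)
  have "c \<circ> c \<in> K" using c is_lift_comp[of Y p id c id c] by (simp add: CT_iff_is_lift_id)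
  moreover have "c \<circ> c \<noteq> c"
  proof
    assume "c \<circ> c = c"
    have "inj c" using c bij_is_inj[OF aut_imp_bij] unfolding CT_def by blast
    moreover have "c (c x) = c x" for x using fun_cong[OF \<open>c \<circ> c = c\<close>, of x] by simp
    ultimately have "c x = x" for x by (simp add: inj_eq)
    with False show False by auto
  qed
  moreover have "c = c0" using c c0(2) False by blast
  ultimately show ?thesis using c0(2) by blast
qed simp

lemma arc_transitive_L:
  assumes "arc_transitive X G" shows "arc_transitive Y L"
  unfolding arc_transitive_def
proof (clarify)
  fix u v u' v' assume uv: "(u, v) \<in> arcs Y" and uv': "(u', v') \<in> arcs Y"
  have verts: "u \<in> verts Y" "v \<in> verts Y" "u' \<in> verts Y" "v' \<in> verts Y"
    using uv uv' graph_Y unfolding graph_def by auto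
  have "(p u, p v) \<in> arcs X" "(p u', p v') \<in> arcs X"
    using uv uv' covering unfolding covering_def by blast+
  then obtain g where g: "g \<in> G" "g (p u) = p u'" "g (p v) = p v'"
    using assms unfolding arc_transitive_def by fast
  then obtain h where h: "is_lift Y p g h" using G_lifts by blast
  have h_aut: "h \<in> aut Y" using h unfolding is_lift_def by blast
  have hu: "h u \<in> verts Y" and hv: "h v \<in> verts Y"
    using aut_mapsto[OF h_aut] verts(1,2) by blast+
  have "p (h u) = p u'" using h verts(1) g(2) unfolding is_lift_def by simp
  then obtain c where c: "c \<in> K" "c (h u) = u'" using CT_unique[OF hu verts(3)] by blast
  have c_aut: "c \<in> aut Y" using c(1) unfolding CT_def by blast
  have "(c (h u), c (h v)) \<in> arcs Y"
    using uv aut_arcs_iff[OF h_aut verts(1,2)] aut_arcs_iff[OF c_aut hu hv] by simp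
  then have "c (h v) \<in> nbhd Y u'" "v' \<in> nbhd Y u'" using c(2) uv' unfolding nbhd_def by simp_all
  moreover have "p (c (h v)) = p v'"
    using c(1) hv h verts(2) g(3) unfolding CT_def is_lift_def by simp
  moreover have "inj_on p (nbhd Y u')"
    using covering verts(3) unfolding covering_def bij_betw_def by blast
  ultimately have "c (h v) = v'" by (blast dest: inj_onD)
  moreover have "c \<circ> h \<in> L"
    using perm_group_comp[OF perm_group_L] CT_subset_L c(1) lift_groupI[OF g(1) h] by blast
  ultimately show "\<exists>f\<in>L. f u = u' \<and> f v = v'" using c(2) by (intro bexI[of _ "c \<circ> h"]) simp_all
qed

text \<open>Covering transformations act semiregularly, so \<open>proj\<close> is injective on vertex stabilisers.\<close>

lemma card_stab_L_le:
  assumes y: "y \<in> verts Y" shows "card (stab L y) \<le> card (stab G (p y))"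
proof (rule card_inj_on_le)
  show "inj_on proj (stab L y)"
  proof (rule inj_onI)
    fix h h' assume h: "h \<in> stab L y" and h': "h' \<in> stab L y" and eq: "proj h = proj h'"
    have hL: "h \<in> L" and h'L: "h' \<in> L" using h h' unfolding stab_def by blast+
    obtain g' where g': "g' \<in> G" "proj h \<circ> g' = id" "g' \<circ> proj h = id"
      using perm_group_inv[OF G_group proj_in_G[OF hL]] by blast
    have "is_lift Y p (proj h \<circ> g') (h \<circ> inv h')"
      using is_lift_comp[OF is_lift_proj[OF hL] is_lift_inv[OF is_lift_proj[OF h'L]]] eq g'(3) by simp
    then have "h \<circ> inv h' \<in> K" using g'(2) by (simp add: CT_iff_is_lift_id)
    moreover have "inv h' y = y"
      using h' inv_f_eq[OF bij_is_inj[OF aut_imp_bij[OF L_aut[OF h'L]]], of y y] unfolding stab_def by simp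
    then have "(h \<circ> inv h') y = y" using h unfolding stab_def by simp
    ultimately have "h \<circ> inv h' = id" by (rule CT_fixes_vertex_imp_id[OF _ y])
    then have "h \<circ> (inv h' \<circ> h') = h'" by (simp flip: comp_assoc)
    then show "h = h'" using aut_inv_comp[OF L_aut[OF h'L]] by simp
  qed
  show "proj ` stab L y \<subseteq> stab G (p y)"
  proof
    fix g assume "g \<in> proj ` stab L y"
    then obtain h where h: "h \<in> L" "h y = y" "g = proj h" unfolding stab_def by blast
    have "p (h y) = proj h (p y)" using is_lift_proj[OF h(1)] y unfolding is_lift_def by blast
    then have "g (p y) = p y" using h(2,3) by simp
    then show "g \<in> stab G (p y)" using h proj_in_G unfolding stab_def by simp
  qed
  have "finite (aut X)" using covering finite_aut unfolding covering_def graph_def by blast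
  then show "finite (stab G (p y))" by (rule finite_subset[rotated]) (use G_aut in \<open>auto simp: stab_def\<close>)
qed

lemma card_hom_Z2_L:
  assumes "has_complement L K" shows "2 * card (hom_Z2 G) \<le> card (hom_Z2 L)"
proof -
  obtain C where C: "C \<subseteq> L" "perm_group C" "C \<inter> K = {id}" "\<forall>h\<in>L. \<exists>a\<in>C. \<exists>e\<in>K. h = a \<circ> e"
    using assms unfolding has_complement_def by blast
  obtain c where c: "c \<noteq> id" "K = {id, c}" by (rule CT_eq_pair)
  have hom: "restrict (\<lambda>h. h \<notin> C) L \<in> hom_Z2 L"
  proof (rule complement_indicator_hom_Z2[OF perm_group_L C(2,1,3,4) c(2)])
    show "c \<circ> c = id" by (rule CT_involution) (simp add: c(2))
    show "h \<circ> c = c \<circ> h" if "h \<in> L" for h by (rule CT_central[OF that]) (simp add: c(2))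
  qed
  have "c \<in> K" by (simp add: c(2))
  then have cL: "c \<in> L" and proj_c: "proj c = id" using CT_subset_L proj_CT by blast+
  have "c \<notin> C" using C(3) \<open>c \<in> K\<close> c(1) by blast
  with cL have "restrict (\<lambda>h. h \<notin> C) L c" by simp
  then show ?thesis
    using card_hom_Z2_double[where \<pi> = proj, OF G_group perm_group_L finite_L _ G_subset_proj_L _
        hom cL proj_c] proj_in_G proj_comp by blast
qed

end

section \<open>Split-admissible chains\<close>

definition arc_transitive_bounded :: "'b graph \<Rightarrow> ('b \<Rightarrow> 'b) set \<Rightarrow> nat \<Rightarrow> bool" where
  "arc_transitive_bounded Y H B \<longleftrightarrow> graph Y \<and> connected_graph Y \<and> H \<subseteq> aut Y \<and> perm_group H
     \<and> arc_transitive Y H \<and> (\<forall>y\<in>verts Y. card (stab H y) \<le> B)"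

lemma arc_transitive_bounded_finite: "arc_transitive_bounded Y H B \<Longrightarrow> finite H"
  unfolding arc_transitive_bounded_def graph_def using finite_aut finite_subset by blast

lemma card_hom_Z2_le_bound:
  assumes "arc_transitive_bounded Y H B" shows "card (hom_Z2 H) \<le> 2 * 2 ^ B"
proof -
  obtain v where v: "v \<in> verts Y"
    using assms unfolding arc_transitive_bounded_def connected_graph_def by blast
  have "card (hom_Z2 H) \<le> 2 * 2 ^ card (stab H v)"
    using assms v unfolding arc_transitive_bounded_def by (blast intro: card_hom_Z2_le_stab)
  also have "\<dots> \<le> 2 * 2 ^ B"
    using assms v unfolding arc_transitive_bounded_def by simp
  finally show ?thesis .
qed

lemma split_step_bounded:
  assumes bounded: "arc_transitive_bounded X G B" and step: "split_step X G Y p"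
  shows "arc_transitive_bounded Y (lift_group Y p G) B"
    and "2 * card (hom_Z2 G) \<le> card (hom_Z2 (lift_group Y p G))"
proof -
  interpret lifting_two_cover X G Y p
    using assms unfolding split_step_def arc_transitive_bounded_def lifting_two_cover_def by blast
  have "card (stab L y) \<le> B" if "y \<in> verts Y" for y
  proof -
    have "p y \<in> verts X" using covering that unfolding covering_def by blast
    then show ?thesis
      using card_stab_L_le[OF that] bounded unfolding arc_transitive_bounded_def by fastforce
  qed
  then show "arc_transitive_bounded Y L B"
    using graph_Y connected_Y L_aut perm_group_L arc_transitive_L bounded
    unfolding arc_transitive_bounded_def by blast
  show "2 * card (hom_Z2 G) \<le> card (hom_Z2 L)"
    using card_hom_Z2_L step unfolding split_step_def by blast
qed

lemma split_chain_nat_bound: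
  "split_chain_nat Y H m \<Longrightarrow> arc_transitive_bounded Y H B \<Longrightarrow> 2 ^ m * card (hom_Z2 H) \<le> 2 * 2 ^ B"
proof (induction m arbitrary: Y H)
  case 0
  then show ?case using card_hom_Z2_le_bound by simp
next
  case (Suc m)
  then obtain Y' :: "nat graph" and p where step: "split_step Y H Y' p"
    and chain: "split_chain_nat Y' (lift_group Y' p H) m" by auto
  have "2 ^ Suc m * card (hom_Z2 H) = 2 ^ m * (2 * card (hom_Z2 H))" by simp
  also have "\<dots> \<le> 2 ^ m * card (hom_Z2 (lift_group Y' p H))"
    using split_step_bounded(2)[OF Suc.prems(2) step] by simp
  also have "\<dots> \<le> 2 * 2 ^ B"
    using Suc.IH[OF chain split_step_bounded(1)[OF Suc.prems(2) step]] .
  finally show ?case .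
qed

lemma split_admissible_chain_le:
  assumes chain: "split_admissible_chain X G n" and bounded: "arc_transitive_bounded X G B"
  shows "n \<le> Suc B"
proof (cases n)
  case (Suc m)
  then obtain Y :: "nat graph" and p where step: "split_step X G Y p"
    and chain': "split_chain_nat Y (lift_group Y p G) m"
    using chain unfolding split_admissible_chain_def by blast
  have "perm_group G" using bounded unfolding arc_transitive_bounded_def by blast
  with arc_transitive_bounded_finite[OF bounded] have "card (hom_Z2 G) \<ge> 1"
    using card_hom_Z2_pos by (simp add: Suc_le_eq)
  then have "2 ^ Suc m \<le> 2 ^ m * (2 * card (hom_Z2 G))" by simp
  also have "\<dots> \<le> 2 ^ m * card (hom_Z2 (lift_group Y p G))"
    using split_step_bounded(2)[OF bounded step] by simp
  also have "\<dots> \<le> 2 ^ Suc B"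
    using split_chain_nat_bound[OF chain' split_step_bounded(1)[OF bounded step]] by simp
  finally show ?thesis using Suc by simp
qed simp

theorem proposition5p1:
  fixes X :: "'a graph" and G :: "('a \<Rightarrow> 'a) set"
  assumes "graph X" and "connected_graph X" and "symmetric_graph X"
    and "aut_subgroup X G" and "arc_transitive X G"
  shows "split_length_finite X G"
proof -
  have G: "G \<subseteq> aut X" "perm_group G" using assms(4) unfolding aut_subgroup_def by blast+
  have "finite G" using finite_aut assms(1) G(1) finite_subset unfolding graph_def by blast
  then have "arc_transitive_bounded X G (card G)"
    using assms(1,2,5) G unfolding arc_transitive_bounded_def stab_def by (auto intro: card_mono)
  then have "{n. split_admissible_chain X G n} \<subseteq> {..Suc (card G)}"
    using split_admissible_chain_le by blast
  then show ?thesis unfolding split_length_finite_def by (rule finite_subset) simp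
qed

end
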